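(* Let $1\le k\le r$ and let $\mathscr I=[I_0,\dots,I_{k-1}]$ be a prime ideal of $\Omega_{H_{k-1}}$. Then $\mathcal{L}\mathscr I=[I_0,\dots,I_{k-1},(\mathrm{res}^k_{k-1})^{-1}(I_{k-1})]$ is a prime ideal of $\Omega_{H_k}$.
   Context: Fix a prime $p$ and an integer $r\ge0$. For $0\le k\le r$ let $R_k$ be the commutative ring which is free as a $\mathbb{Z}$-module with basis $X_{k,0},\dots,X_{k,k}$ and multiplication $X_{k,i}X_{k,j}=p^{k-\max(i,j)}X_{k,\min(i,j)}$; thus $X_{k,k}=1$, and an integer $n$ is identified with $nX_{k,k}$. For $0\le k\le\ell\le r$ define: the additive map $\mathrm{ind}^\ell_k:R_k\to R_\ell$, $X_{k,i}\mapsto X_{\ell,i}$; the ring homomorphism $\mathrm{res}^\ell_k:R_\ell\to R_k$, $\mathrm{res}^\ell_k(X_{\ell,i})=p^{\ell-k}X_{k,i}$ if $i\le k$ and $=p^{\ell-i}$ if $i\ge k$; and the multiplicative map $\mathrm{jnd}^\ell_k:R_k\to R_\ell$, $$\mathrm{jnd}^\ell_k\Big(\sum_{i=0}^k m_iX_{k,i}\Big)=m_kX_{\ell,\ell}+\sum_{k\le i<\ell}\frac{m_k^{p^{\ell-i}}-m_k^{p^{\ell-i-1}}}{p^{\ell-i}}X_{\ell,i}+\sum_{0\le i<k}\frac{(\sum_{s=i}^k m_sp^{k-s})^{p^{\ell-k}}-(\sum_{s=i+1}^k m_sp^{k-s})^{p^{\ell-k}}}{p^{\ell-i}}X_{\ell,i}$$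 ($m_i\in\mathbb{Z}$). For $k=\ell$ these maps are the identity. These data form the Burnside Tambara functor on $\mathbb{Z}/p^r\mathbb{Z}$; keeping indices $\le n$ gives $\Omega_{H_n}$. An ideal of $\Omega_{H_n}$ is a sequence $[I_0,\dots,I_n]$ of ideals $I_k\subseteq R_k$ such that for every $1\le k\le n$: $\mathrm{ind}^k_{k-1}(I_{k-1})\subseteq I_k$, $\mathrm{res}^k_{k-1}(I_k)\subseteq I_{k-1}$, $\mathrm{jnd}^k_{k-1}(I_{k-1})\subseteq I_k$. It is proper if $I_0\ne R_0$. A proper ideal is prime if for all $0\le\ell\le k\le n$, $a\in R_k$, $b\in R_\ell$: whenever $(\mathrm{jnd}^m_i\mathrm{res}^k_i(a))\cdot(\mathrm{jnd}^m_j\mathrm{res}^\ell_j(b))\in I_m$ for all $0\le i\le k$, $0\le j\le\ell$, $m=\max(i,j)$, then $a\in I_k$ or $b\in I_\ell$. *)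

theory Defs
  imports "HOL-Computational_Algebra.Primes"
begin

text \<open>Elements of R_k are represented by their coefficient functions
  a :: nat => int, a i being the coefficient of X_{k,i}; the carrier of R_k
  consists of those with a i = 0 for i > k.\<close>

definition Rcarrier :: "nat \<Rightarrow> (nat \<Rightarrow> int) set" where
  "Rcarrier k = {a. \<forall>i>k. a i = 0}"

text \<open>Multiplication in R_k: X_{k,i} X_{k,j} = p^(k - max i j) X_{k, min i j}.\<close>
definition Rmult :: "nat \<Rightarrow> nat \<Rightarrow> (nat \<Rightarrow> int) \<Rightarrow> (nat \<Rightarrow> int) \<Rightarrow> (nat \<Rightarrow> int)" where
  "Rmult p k a b = (\<lambda>m. if m \<le> k then
      (\<Sum>i\<le>k. \<Sum>j\<le>k. if min i j = m then a i * b j * int p ^ (k - max i j) else 0)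
    else 0)"

definition is_ideal :: "nat \<Rightarrow> nat \<Rightarrow> (nat \<Rightarrow> int) set \<Rightarrow> bool" where
  "is_ideal p k I \<longleftrightarrow> I \<subseteq> Rcarrier k \<and> (\<lambda>i. 0) \<in> I
     \<and> (\<forall>x\<in>I. \<forall>y\<in>I. (\<lambda>i. x i + y i) \<in> I)
     \<and> (\<forall>x\<in>I. (\<lambda>i. - x i) \<in> I)
     \<and> (\<forall>a\<in>Rcarrier k. \<forall>x\<in>I. Rmult p k a x \<in> I)"

definition ind :: "nat \<Rightarrow> nat \<Rightarrow> (nat \<Rightarrow> int) \<Rightarrow> (nat \<Rightarrow> int)" where
  "ind l k a = (\<lambda>i. if i \<le> k then a i else 0)"

definition res :: "nat \<Rightarrow> nat \<Rightarrow> nat \<Rightarrow> (nat \<Rightarrow> int) \<Rightarrow> (nat \<Rightarrow> int)" where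
  "res p l k a = (\<lambda>j. if j < k then int p ^ (l - k) * a j
                      else if j = k then (\<Sum>i\<in>{k..l}. a i * int p ^ (l - i))
                      else 0)"

text \<open>jnd^l_k : R_k -> R_l (the divisions are exact).\<close>
definition jnd :: "nat \<Rightarrow> nat \<Rightarrow> nat \<Rightarrow> (nat \<Rightarrow> int) \<Rightarrow> (nat \<Rightarrow> int)" where
  "jnd p l k a = (\<lambda>i.
     if i = l then a k
     else if k \<le> i \<and> i < l then
       (a k ^ (p ^ (l - i)) - a k ^ (p ^ (l - i - 1))) div (int p ^ (l - i))
     else if i < k then
       ((\<Sum>s\<in>{i..k}. a s * int p ^ (k - s)) ^ (p ^ (l - k))
        - (\<Sum>s\<in>{i+1..k}. a s * int p ^ (k - s)) ^ (p ^ (l - k))) div (int p ^ (l - i))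
     else 0)"

text \<open>Ideal of Omega_{H_n}: sequence I 0, ..., I n (values of I at indices > n are irrelevant).\<close>
definition is_Omega_ideal :: "nat \<Rightarrow> nat \<Rightarrow> (nat \<Rightarrow> (nat \<Rightarrow> int) set) \<Rightarrow> bool" where
  "is_Omega_ideal p n I \<longleftrightarrow>
     (\<forall>k\<le>n. is_ideal p k (I k))
     \<and> (\<forall>k. 1 \<le> k \<and> k \<le> n \<longrightarrow>
          ind k (k - 1) ` I (k - 1) \<subseteq> I k
        \<and> res p k (k - 1) ` I k \<subseteq> I (k - 1)
        \<and> jnd p k (k - 1) ` I (k - 1) \<subseteq> I k)"

definition is_Omega_prime :: "nat \<Rightarrow> nat \<Rightarrow> (nat \<Rightarrow> (nat \<Rightarrow> int) set) \<Rightarrow> bool" where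
  "is_Omega_prime p n I \<longleftrightarrow>
     is_Omega_ideal p n I \<and> I 0 \<noteq> Rcarrier 0
     \<and> (\<forall>l k a b. l \<le> k \<and> k \<le> n \<and> a \<in> Rcarrier k \<and> b \<in> Rcarrier l \<longrightarrow>
          (\<forall>i\<le>k. \<forall>j\<le>l.
             Rmult p (max i j) (jnd p (max i j) i (res p k i a)) (jnd p (max i j) j (res p l j b))
               \<in> I (max i j))
          \<longrightarrow> a \<in> I k \<or> b \<in> I l)"

definition Lift :: "nat \<Rightarrow> nat \<Rightarrow> (nat \<Rightarrow> (nat \<Rightarrow> int) set) \<Rightarrow> (nat \<Rightarrow> (nat \<Rightarrow> int) set)" where
  "Lift p k I = I(k := {a \<in> Rcarrier k. res p k (k - 1) a \<in> I (k - 1)})"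

end

theory Submission
  imports Defs "HOL-Number_Theory.Number_Theory"
begin

text \<open>The marks \<open>ghost p n t\<close> (\<open>t \<le> n\<close>; the mark of \<open>a\<close> at \<open>H\<^sub>t\<close>) are ring
  homomorphisms \<open>R\<^sub>n \<rightarrow> \<int>\<close> which jointly embed \<open>R\<^sub>n\<close> into \<open>\<int>\<^bsup>n+1\<^esup>\<close>. In these coordinates
  restriction forgets the top marks, and \<open>jnd\<^sup>n\<^sup>+\<^sup>1\<^sub>n\<close> raises the marks to the \<open>p\<close>-th power
  (Fermat's little theorem and \<open>x \<equiv> y (mod p\<^sup>e) \<Longrightarrow> x\<^sup>p \<equiv> y\<^sup>p (mod p\<^sup>e\<^sup>+\<^sup>1)\<close> make its
  divisions exact). So \<open>res\<close> is a ring homomorphism with \<open>res \<circ> jnd = (-)\<^sup>p\<close> and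
  \<open>res \<circ> ind = p \<cdot> (-)\<close>, whence the preimage of \<open>I\<^sub>n\<close> is an ideal compatible with \<open>ind\<close> and
  \<open>jnd\<close>. For primality, a test product on levels \<open>\<le> n\<close> sees an element of level \<open>n+1\<close> only
  through its restriction to level \<open>n\<close>, since restrictions compose; so the prime condition
  of the lift is that of \<open>I\<close> applied to the restrictions.\<close>

definition ghost :: "nat \<Rightarrow> nat \<Rightarrow> nat \<Rightarrow> (nat \<Rightarrow> int) \<Rightarrow> int" where
  "ghost p n t a = (\<Sum>i\<in>{t..n}. a i * int p ^ (n - i))"

lemma ghost_step: "t \<le> n \<Longrightarrow> ghost p n t a = a t * int p ^ (n - t) + ghost p n (Suc t) a"
  by (simp add: ghost_def sum.atLeast_Suc_atMost)

lemma ghost_beyond: "n < t \<Longrightarrow> ghost p n t a = 0"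
  by (simp add: ghost_def)

lemma ghost_top: "ghost p n n a = a n"
  by (simp add: ghost_def)

lemma ghost_injective:
  assumes "p > 0" "a \<in> Rcarrier n" "b \<in> Rcarrier n" "\<And>t. t \<le> n \<Longrightarrow> ghost p n t a = ghost p n t b"
  shows "a = b"
proof
  fix t
  have eq: "ghost p n t a = ghost p n t b" for t
    using assms(4) by (cases "t \<le> n") (simp_all add: ghost_beyond)
  show "a t = b t"
  proof (cases "t \<le> n")
    case True
    then have "a t * int p ^ (n - t) = b t * int p ^ (n - t)"
      using eq[of t] eq[of "Suc t"] by (simp add: ghost_step)
    then show ?thesis using assms(1) by simp
  qed (use assms(2,3) in \<open>simp add: Rcarrier_def\<close>)
qed

lemma ghost_Rmult:
  assumes "t \<le> n"
  shows "ghost p n t (Rmult p n a b) = ghost p n t a * ghost p n t b"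
proof -
  define F where "F i j = a i * b j * int p ^ (n - max i j) * int p ^ (n - min i j)" for i j
  define A where "A i = (if t \<le> i then a i * int p ^ (n - i) else 0)" for i
  define B where "B j = (if t \<le> j then b j * int p ^ (n - j) else 0)" for j
  have "ghost p n t (Rmult p n a b) = (\<Sum>m\<in>{t..n}. \<Sum>i\<le>n. \<Sum>j\<le>n. if min i j = m then F i j else 0)"
    unfolding ghost_def Rmult_def F_def
    by (rule sum.cong) (auto simp: sum_distrib_right intro!: sum.cong)
  also have "\<dots> = (\<Sum>i\<le>n. \<Sum>j\<le>n. \<Sum>m\<in>{t..n}. if min i j = m then F i j else 0)"
    by (subst sum.swap) (rule sum.cong, simp, subst sum.swap, simp)
  also have "\<dots> = (\<Sum>i\<le>n. \<Sum>j\<le>n. if t \<le> min i j then F i j else 0)"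
    by (intro sum.cong) auto
  also have "\<dots> = (\<Sum>i\<le>n. \<Sum>j\<le>n. A i * B j)"
  proof (intro sum.cong refl)
    fix i j
    have "int p ^ (n - max i j) * int p ^ (n - min i j) = int p ^ (n - i) * int p ^ (n - j)"
      by (cases "i \<le> j") (simp_all add: max_def min_def mult.commute)
    then show "(if t \<le> min i j then F i j else 0) = A i * B j"
      unfolding F_def A_def B_def by (simp add: algebra_simps)
  qed
  also have "\<dots> = (\<Sum>i\<le>n. A i) * (\<Sum>j\<le>n. B j)"
    by (simp add: sum_product)
  also have "\<dots> = ghost p n t a * ghost p n t b"
    by (simp add: A_def B_def ghost_def sum.If_cases atLeastAtMost_def atLeast_def atMost_def
        Int_commute)
  finally show ?thesis .
qed

lemma ghost_res:
  assumes "t \<le> k" "k \<le> l"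
  shows "ghost p k t (res p l k a) = ghost p l t a"
  using assms(1)
proof (induction t rule: inc_induct)
  case base
  show ?case by (simp add: ghost_top res_def ghost_def)
next
  case (step t)
  have "ghost p k t (res p l k a) = int p ^ (l - k) * a t * int p ^ (k - t) + ghost p l (Suc t) a"
    using step by (simp add: ghost_step res_def)
  also have "int p ^ (l - k) * a t * int p ^ (k - t) = a t * int p ^ (l - t)"
    using step assms(2) by (simp add: power_add[symmetric])
  finally show ?case using step assms(2) by (simp add: ghost_step)
qed

lemma res_carrier: "res p l k a \<in> Rcarrier k"
  by (simp add: Rcarrier_def res_def)

lemma jnd_carrier: "k \<le> l \<Longrightarrow> jnd p l k a \<in> Rcarrier l"
  by (simp add: Rcarrier_def jnd_def)

lemma ind_carrier: "k \<le> l \<Longrightarrow> ind l k a \<in> Rcarrier l"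
  by (simp add: Rcarrier_def ind_def)

lemma Rmult_carrier: "Rmult p k a b \<in> Rcarrier k"
  by (simp add: Rcarrier_def Rmult_def)

lemma res_self:
  assumes "p > 0" "a \<in> Rcarrier k"
  shows "res p k k a = a"
  using assms by (intro ghost_injective[of p]) (auto simp: res_carrier intro: ghost_res)

lemma res_res:
  assumes "p > 0" "i \<le> m" "m \<le> k"
  shows "res p m i (res p k m a) = res p k i a"
  using assms by (intro ghost_injective[of p _ i]) (simp_all add: ghost_res res_carrier)

lemma res_Rmult:
  assumes "p > 0" "k \<le> l"
  shows "res p l k (Rmult p l a b) = Rmult p k (res p l k a) (res p l k b)"
  using assms by (intro ghost_injective[of p _ k])
    (simp_all add: ghost_res ghost_Rmult res_carrier Rmult_carrier)

lemma power_dvd_diff_power: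
  fixes x y :: int
  assumes "int p ^ e dvd x - y" "1 \<le> e"
  shows "int p ^ Suc e dvd x ^ p - y ^ p"
proof -
  have "int p dvd int p ^ e"
    using assms(2) by simp
  then have "int p dvd x - y"
    using assms(1) dvd_trans by blast
  then have xy: "[x = y] (mod int p)"
    by (simp add: cong_iff_dvd_diff)
  define S where "S = (\<Sum>i<p. y ^ (p - Suc i) * x ^ i)"
  have "[S = (\<Sum>i<p. y ^ (p - Suc i) * y ^ i)] (mod int p)"
    unfolding S_def by (intro cong_sum cong_mult cong_pow xy cong_refl)
  also have "(\<Sum>i<p. y ^ (p - Suc i) * y ^ i) = int p * y ^ (p - 1)"
    by (simp add: power_add[symmetric])
  finally have "int p dvd S"
    by (metis cong_dvd_iff dvd_triv_left)
  then have "int p ^ e * int p dvd (x - y) * S"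
    using assms(1) by (simp add: mult_dvd_mono)
  then show ?thesis
    unfolding S_def by (simp only: power_diff_sumr2 power_Suc2)
qed

lemma fermat_little_int:
  assumes "prime p"
  shows "int p dvd a ^ p - a"
proof -
  have p0: "p > 0" using assms prime_gt_0_nat by blast
  define b where "b = nat (a mod int p)"
  have ab: "[a = int b] (mod int p)"
    using p0 by (simp add: b_def cong_def)
  have "[b ^ p = b] (mod p)"
  proof (cases "p dvd b")
    case True
    then show ?thesis
      using p0 by (simp add: cong_def) (metis dvd_imp_mod_0 dvd_power dvd_trans)
  next
    case False
    then have "[b ^ (p - 1) * b = 1 * b] (mod p)"
      by (intro cong_scalar_right fermat_theorem assms)
    moreover have "b ^ (p - 1) * b = b ^ p"
      using p0 by (simp add: power_Suc2[symmetric])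
    ultimately show ?thesis by simp
  qed
  then have "[int b ^ p = int b] (mod int p)"
    by (metis cong_int_iff of_nat_power)
  then have "[a ^ p = a] (mod int p)"
    by (meson ab cong_pow cong_sym cong_trans)
  then show ?thesis
    by (simp add: cong_iff_dvd_diff)
qed

lemma ghost_jnd:
  assumes "prime p" "t \<le> n"
  shows "ghost p (Suc n) t (jnd p (Suc n) n a) = ghost p n t a ^ p"
  using assms(2)
proof (induction t rule: inc_induct)
  case base
  have "int p dvd a n ^ p - a n"
    by (rule fermat_little_int[OF assms(1)])
  then have "(a n ^ p - a n) div int p * int p + a n = a n ^ p"
    by simp
  then show ?case
    by (simp add: ghost_step ghost_top jnd_def)
next
  case (step t)
  let ?G = "\<lambda>t. ghost p n t a"
  have "int p ^ (n - t) dvd ?G t - ?G (Suc t)"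
    using step by (simp add: ghost_step)
  then have "int p ^ Suc (n - t) dvd ?G t ^ p - ?G (Suc t) ^ p"
    using step by (intro power_dvd_diff_power) auto
  moreover have "jnd p (Suc n) n a t = (?G t ^ p - ?G (Suc t) ^ p) div int p ^ Suc (n - t)"
    using step by (simp add: jnd_def ghost_def Suc_diff_le)
  ultimately have "jnd p (Suc n) n a t * int p ^ (Suc n - t) + ?G (Suc t) ^ p = ?G t ^ p"
    using step by (simp add: Suc_diff_le)
  then show ?case
    using step by (simp add: ghost_step)
qed

fun Rpower :: "nat \<Rightarrow> nat \<Rightarrow> (nat \<Rightarrow> int) \<Rightarrow> nat \<Rightarrow> (nat \<Rightarrow> int)" where
  "Rpower p n a 0 = (\<lambda>i. if i = n then 1 else 0)"
| "Rpower p n a (Suc e) = Rmult p n (Rpower p n a e) a"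

lemma Rpower_carrier: "Rpower p n a e \<in> Rcarrier n"
  by (cases e) (simp_all add: Rmult_carrier, simp add: Rcarrier_def)

lemma ghost_Rpower:
  assumes "t \<le> n"
  shows "ghost p n t (Rpower p n a e) = ghost p n t a ^ e"
proof (induction e)
  case 0
  have "ghost p n t (Rpower p n a 0) = (\<Sum>i\<in>{t..n}. if i = n then 1 else 0)"
    unfolding ghost_def by (rule sum.cong) auto
  then show ?case using assms by simp
qed (simp add: ghost_Rmult assms)

lemma res_jnd:
  assumes "prime p"
  shows "res p (Suc n) n (jnd p (Suc n) n a) = Rpower p n a p"
  using assms
  by (intro ghost_injective[of p _ n])
     (simp_all add: ghost_res ghost_jnd ghost_Rpower prime_gt_0_nat res_carrier Rpower_carrier)

lemma res_ind:
  assumes "a \<in> Rcarrier n"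
  shows "res p (Suc n) n (ind (Suc n) n a) = (\<lambda>i. int p * a i)"
  using assms by (auto simp: res_def ind_def Rcarrier_def)

lemma is_ideal_smult:
  assumes "is_ideal p k I" "x \<in> I"
  shows "(\<lambda>i. int c * x i) \<in> I"
proof (induction c)
  case 0
  then show ?case using assms(1) by (simp add: is_ideal_def)
next
  case (Suc c)
  then have "(\<lambda>i. int c * x i + x i) \<in> I"
    using assms by (simp add: is_ideal_def)
  then show ?case by (simp add: algebra_simps)
qed

lemma res_add: "res p l k (\<lambda>i. x i + y i) = (\<lambda>j. res p l k x j + res p l k y j)"
  by (auto simp: res_def sum.distrib algebra_simps)

lemma res_uminus: "res p l k (\<lambda>i. - x i) = (\<lambda>j. - res p l k x j)"
  by (auto simp: res_def sum_negf)

lemma res_zero: "res p l k (\<lambda>i. 0) = (\<lambda>j. 0)"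
  by (auto simp: res_def)

lemma is_ideal_res_preimage:
  assumes "p > 0" "k \<le> l" "is_ideal p k J"
  shows "is_ideal p l {a \<in> Rcarrier l. res p l k a \<in> J}"
  unfolding is_ideal_def
proof (intro conjI ballI)
  fix c x assume "c \<in> Rcarrier l" "x \<in> {a \<in> Rcarrier l. res p l k a \<in> J}"
  then show "Rmult p l c x \<in> {a \<in> Rcarrier l. res p l k a \<in> J}"
    using assms by (simp add: is_ideal_def res_Rmult Rmult_carrier res_carrier)
qed (use assms in \<open>auto simp: is_ideal_def Rcarrier_def res_zero res_add res_uminus\<close>)

lemma ind_res_preimage:
  assumes "is_ideal p n J"
  shows "ind (Suc n) n ` J \<subseteq> {a \<in> Rcarrier (Suc n). res p (Suc n) n a \<in> J}"
proof
  fix y assume "y \<in> ind (Suc n) n ` J"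
  then obtain x where "x \<in> J" "y = ind (Suc n) n x" by blast
  moreover have "x \<in> Rcarrier n" "(\<lambda>i. int p * x i) \<in> J"
    using assms \<open>x \<in> J\<close> by (auto simp: is_ideal_def intro: is_ideal_smult)
  ultimately show "y \<in> {a \<in> Rcarrier (Suc n). res p (Suc n) n a \<in> J}"
    by (simp add: ind_carrier res_ind)
qed

lemma jnd_res_preimage:
  assumes "prime p" "is_ideal p n J"
  shows "jnd p (Suc n) n ` J \<subseteq> {a \<in> Rcarrier (Suc n). res p (Suc n) n a \<in> J}"
proof
  fix y assume "y \<in> jnd p (Suc n) n ` J"
  then obtain x where x: "x \<in> J" "y = jnd p (Suc n) n x" by blast
  have "Rpower p n x p = Rmult p n (Rpower p n x (p - 1)) x"
    using assms(1) prime_gt_0_nat by (metis Rpower.simps(2) Suc_diff_1)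
  also have "\<dots> \<in> J"
    using assms(2) x(1) Rpower_carrier by (simp add: is_ideal_def)
  finally show "y \<in> {a \<in> Rcarrier (Suc n). res p (Suc n) n a \<in> J}"
    using x assms(1) by (simp add: jnd_carrier res_jnd)
qed

lemma is_Omega_ideal_Lift:
  assumes "prime p" "is_Omega_ideal p n I"
  shows "is_Omega_ideal p (Suc n) (Lift p (Suc n) I)"
proof -
  let ?J = "{a \<in> Rcarrier (Suc n). res p (Suc n) n a \<in> I n}"
  have In: "is_ideal p n (I n)"
    using assms(2) by (simp add: is_Omega_ideal_def)
  have "is_ideal p (Suc n) ?J"
    using assms(1) In by (intro is_ideal_res_preimage) (simp_all add: prime_gt_0_nat)
  moreover have "ind (Suc n) n ` I n \<subseteq> ?J" "jnd p (Suc n) n ` I n \<subseteq> ?J"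
    using assms(1) In by (simp_all add: ind_res_preimage jnd_res_preimage)
  moreover have "res p (Suc n) n ` ?J \<subseteq> I n"
    by auto
  ultimately show ?thesis
    using assms(2) unfolding is_Omega_ideal_def Lift_def
    by (auto simp: le_Suc_eq)
qed

definition jnd_res_products_in ::
    "nat \<Rightarrow> (nat \<Rightarrow> (nat \<Rightarrow> int) set) \<Rightarrow> nat \<Rightarrow> nat \<Rightarrow> (nat \<Rightarrow> int) \<Rightarrow> (nat \<Rightarrow> int) \<Rightarrow> bool" where
  "jnd_res_products_in p I k l a b \<longleftrightarrow>
     (\<forall>i\<le>k. \<forall>j\<le>l.
        Rmult p (max i j) (jnd p (max i j) i (res p k i a)) (jnd p (max i j) j (res p l j b))
          \<in> I (max i j))"

lemma is_Omega_prime_iff: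
  "is_Omega_prime p n I \<longleftrightarrow>
     is_Omega_ideal p n I \<and> I 0 \<noteq> Rcarrier 0
     \<and> (\<forall>l k a b. l \<le> k \<and> k \<le> n \<and> a \<in> Rcarrier k \<and> b \<in> Rcarrier l \<longrightarrow>
          jnd_res_products_in p I k l a b \<longrightarrow> a \<in> I k \<or> b \<in> I l)"
  by (simp add: is_Omega_prime_def jnd_res_products_in_def)

lemma jnd_res_products_in_Lift:
  assumes "p > 0" "jnd_res_products_in p (Lift p (Suc n) I) k l a b"
  shows "jnd_res_products_in p I (min k n) (min l n) (res p k (min k n) a) (res p l (min l n) b)"
  unfolding jnd_res_products_in_def
proof (intro allI impI)
  fix i j assume ij: "i \<le> min k n" "j \<le> min l n"
  then have "res p (min k n) i (res p k (min k n) a) = res p k i a"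
    "res p (min l n) j (res p l (min l n) b) = res p l j b"
    using assms(1) by (simp_all add: res_res)
  moreover have "Lift p (Suc n) I (max i j) = I (max i j)"
    using ij by (auto simp: Lift_def max_def)
  ultimately show "Rmult p (max i j) (jnd p (max i j) i (res p (min k n) i (res p k (min k n) a)))
      (jnd p (max i j) j (res p (min l n) j (res p l (min l n) b))) \<in> I (max i j)"
    using assms(2) ij unfolding jnd_res_products_in_def by force
qed

lemma mem_Lift_iff:
  assumes "p > 0" "k \<le> Suc n" "a \<in> Rcarrier k"
  shows "a \<in> Lift p (Suc n) I k \<longleftrightarrow> res p k (min k n) a \<in> I (min k n)"
proof (cases "k \<le> n")
  case True
  then show ?thesis using assms by (simp add: Lift_def res_self)
next
  case False
  then show ?thesis using assms by (simp add: Lift_def le_Suc_eq)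
qed

lemma Lift_prime_condition:
  assumes "is_Omega_prime p n I" "p > 0" "l \<le> k" "k \<le> Suc n"
    and "a \<in> Rcarrier k" "b \<in> Rcarrier l"
    and "jnd_res_products_in p (Lift p (Suc n) I) k l a b"
  shows "a \<in> Lift p (Suc n) I k \<or> b \<in> Lift p (Suc n) I l"
proof -
  have "res p k (min k n) a \<in> I (min k n) \<or> res p l (min l n) b \<in> I (min l n)"
    using assms(1,3) jnd_res_products_in_Lift[OF assms(2,7)]
    unfolding is_Omega_prime_iff by (auto simp: res_carrier)
  then show ?thesis
    using assms(2-6) by (simp add: mem_Lift_iff)
qed

theorem corollary4:
  fixes p r k :: nat and I :: "nat \<Rightarrow> (nat \<Rightarrow> int) set"
  assumes "prime p" and "1 \<le> k" and "k \<le> r"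
    and "is_Omega_prime p (k - 1) I"
  shows "is_Omega_prime p k (Lift p k I)"
proof -
  obtain n where k: "k = Suc n"
    using assms(2) by (cases k) auto
  have p: "p > 0"
    using assms(1) prime_gt_0_nat by blast
  have I: "is_Omega_prime p n I"
    using assms(4) k by simp
  then have "is_Omega_ideal p (Suc n) (Lift p (Suc n) I)"
    using assms(1) by (simp add: is_Omega_prime_iff is_Omega_ideal_Lift)
  moreover have "Lift p (Suc n) I 0 \<noteq> Rcarrier 0"
    using I by (simp add: is_Omega_prime_iff Lift_def)
  ultimately show ?thesis
    unfolding k is_Omega_prime_iff using Lift_prime_condition[OF I p] by blast
qed

end
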